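(* Let $N\ge1$ and suppose the parameter space $\Theta$ of the correlated Bernoulli random graph model satisfies: (a) $\Theta$ is nondegenerate; (b) edge correlations are component-uniform, i.e. there is a function $\varrho_E:\Theta\to\mathbb{R}$ such that for all $\theta\in\Theta$ and all $i=1,\dots,N$, $\varrho_i(\theta)=\varrho_E(\theta)$; (c) $\Theta\not\subseteq\mathcal{R}^o$, i.e. there exists $\theta\in\Theta$ with $\varrho_E(\theta)\neq0$. Then there does not exist an unbiased estimator of $\varrho_E$, i.e. no statistic $S:\mathcal{X}\to\mathbb{R}$ satisfies $\mathbb{E}_\theta(S)=\varrho_E(\theta)$ for all $\theta\in\Theta$.
   Context: Correlated Bernoulli random graph model: fix a positive integer $N$ and let $\mathcal{R}=\{(p_1,\dots,p_N,\varrho_1,\dots,\varrho_N): p_i,\varrho_i\in[0,1]\}$; a parameter space is any $\Theta\subseteq\mathcal{R}$, and $\varrho_i(\theta)$ denotes the $(N+i)$th coordinate of $\theta$. For $\theta\in\Theta$, the pairs $(X_i,Y_i)$, $i=1,\dots,N$, of $\{0,1\}$-valued random variables are independent, $X_i,Y_i$ are marginally Bernoulli$(p_i)$ with Pearson correlation $\varrho_i$ (so $\mathbb{P}(X_i=Y_i=1)=p_i^2+\varrho_ip_i(1-p_i)$, $\mathbb{P}(X_i=Y_i=0)=(1-p_i)^2+\varrho_ip_i(1-p_i)$, $\mathbb{P}(X_i=1,Y_i=0)=\mathbb{P}(X_i=0,Y_i=1)=(1-\varrho_i)p_i(1-p_i)$). Sample space $\mathcal{X}=\{(x,y):x,y\in\{0,1\}^N\}$.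 Let $\mathcal{R}^o=\{(p_1,\dots,p_N,0,\dots,0):p_i\in\mathbb{R}\}$; $\Theta$ is nondegenerate if $\Theta\cap\mathcal{R}^o$ has an interior point relative to $\mathcal{R}^o$, i.e. there exist $z\in\Theta\cap\mathcal{R}^o$ and $\epsilon>0$ such that every point of $\mathcal{R}^o$ within distance $\epsilon$ of $z$ lies in $\Theta$. *)

theory Defs
  imports Complex_Main
begin

text \<open>Parameters theta = (p, rho) with p = (p_1..p_N), rho = (rho_1..rho_N) as real lists of
  length N (list index i corresponds to coordinate i+1). Samples (x, y) with x, y bit lists
  of length N (True = 1).\<close>

type_synonym param = "real list \<times> real list"
type_synonym sample = "bool list \<times> bool list"

definition param_R :: "nat \<Rightarrow> param set" where
  "param_R N = {(p, r). length p = N \<and> length r = N \<and>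
                 (\<forall>i<N. 0 \<le> p ! i \<and> p ! i \<le> 1 \<and> 0 \<le> r ! i \<and> r ! i \<le> 1)}"

definition param_Ro :: "nat \<Rightarrow> param set" where
  "param_Ro N = {(p, r). length p = N \<and> length r = N \<and> (\<forall>i<N. r ! i = 0)}"

definition param_dist :: "nat \<Rightarrow> param \<Rightarrow> param \<Rightarrow> real" where
  "param_dist N a b = sqrt (\<Sum>i<N. (fst a ! i - fst b ! i)^2 + (snd a ! i - snd b ! i)^2)"

definition nondegenerate :: "nat \<Rightarrow> param set \<Rightarrow> bool" where
  "nondegenerate N \<Theta> \<longleftrightarrow> (\<exists>z \<in> \<Theta> \<inter> param_Ro N. \<exists>\<epsilon>>0.
       \<forall>w \<in> param_Ro N. param_dist N z w < \<epsilon> \<longrightarrow> w \<in> \<Theta>)"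

text \<open>Joint pmf of a correlated Bernoulli pair with marginal p and correlation r.\<close>
definition cb_prob :: "real \<Rightarrow> real \<Rightarrow> bool \<Rightarrow> bool \<Rightarrow> real" where
  "cb_prob p r a b =
     (if a \<and> b then p^2 + r * p * (1 - p)
      else if \<not> a \<and> \<not> b then (1 - p)^2 + r * p * (1 - p)
      else (1 - r) * p * (1 - p))"

definition sample_space :: "nat \<Rightarrow> sample set" where
  "sample_space N = {(x, y). length x = N \<and> length y = N}"

definition cb_pmf :: "nat \<Rightarrow> param \<Rightarrow> sample \<Rightarrow> real" where
  "cb_pmf N \<theta> s = (\<Prod>i<N. cb_prob (fst \<theta> ! i) (snd \<theta> ! i) (fst s ! i) (snd s ! i))"

definition cb_expect :: "nat \<Rightarrow> param \<Rightarrow> (sample \<Rightarrow> real) \<Rightarrow> real" where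
  "cb_expect N \<theta> S = (\<Sum>s \<in> sample_space N. S s * cb_pmf N \<theta> s)"

end

theory Submission
  imports Defs "HOL-Computational_Algebra.Polynomial"
begin

text \<open>
  Nondegeneracy gives a box of uncorrelated parameters inside
  \<open>\<Theta>\<close>, and there \<open>\<rho>\<^sub>E = 0\<close>, so the expectation of \<open>S\<close> vanishes under every product of
  independent Bernoulli pairs with \<open>p\<^sub>i\<close> in the box. The expectation is multilinear in the
  per-coordinate joint pmfs, and in one coordinate the pmf of an independent pair is the
  quadratic Bernstein combination \<open>(1-p)\<^sup>2 e\<^sub>0 + p(1-p) e\<^sub>1 + p\<^sup>2 e\<^sub>2\<close> of the indicators
  \<open>e\<^sub>k\<close> of "\<open>k\<close> ones". Vanishing for infinitely many \<open>p\<close> forces vanishing on each \<open>e\<^sub>k\<close>,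
  hence on every symmetric kernel. Replacing the coordinates one at a time, the expectation
  vanishes under every product of symmetric kernels, in particular under every correlated
  Bernoulli model, contradicting \<open>\<rho>\<^sub>E(\<theta>) \<noteq> 0\<close>.
\<close>

definition kernel_expect ::
    "nat \<Rightarrow> (sample \<Rightarrow> real) \<Rightarrow> (nat \<Rightarrow> bool \<Rightarrow> bool \<Rightarrow> real) \<Rightarrow> real" where
  "kernel_expect N S D = (\<Sum>s\<in>sample_space N. S s * (\<Prod>i<N. D i (fst s ! i) (snd s ! i)))"

definition symmetric_kernel :: "(bool \<Rightarrow> bool \<Rightarrow> real) \<Rightarrow> bool" where
  "symmetric_kernel X \<longleftrightarrow> X True False = X False True"

definition ones_kernel :: "nat \<Rightarrow> bool \<Rightarrow> bool \<Rightarrow> real" where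
  "ones_kernel k a b = of_bool (of_bool a + of_bool b = k)"

lemma symmetric_kernel_cb_prob: "symmetric_kernel (cb_prob p r)"
  by (simp add: symmetric_kernel_def cb_prob_def)

lemma cb_expect_eq_kernel_expect:
  "cb_expect N \<theta> S = kernel_expect N S (\<lambda>i. cb_prob (fst \<theta> ! i) (snd \<theta> ! i))"
  unfolding cb_expect_def kernel_expect_def cb_pmf_def ..

lemma kernel_expect_cong:
  "(\<And>i. i < N \<Longrightarrow> D i = D' i) \<Longrightarrow> kernel_expect N S D = kernel_expect N S D'"
  unfolding kernel_expect_def by (intro sum.cong refl arg_cong2[where f = "(*)"] prod.cong) auto

lemma cb_expect_uncorrelated:
  "cb_expect N (map p [0..<N], replicate N 0) S = kernel_expect N S (\<lambda>i. cb_prob (p i) 0)"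
  unfolding cb_expect_eq_kernel_expect by (rule kernel_expect_cong) simp

lemma prod_lessThan_fun_upd:
  fixes N :: nat
  assumes "j < N"
  shows "(\<Prod>i<N. (D(j := X)) i (f i) (g i)) = X (f j) (g j) * (\<Prod>i\<in>{..<N} - {j}. D i (f i) (g i))"
proof -
  have "(\<Prod>i<N. (D(j := X)) i (f i) (g i)) =
        (D(j := X)) j (f j) (g j) * (\<Prod>i\<in>{..<N} - {j}. (D(j := X)) i (f i) (g i))"
    using assms by (intro prod.remove) auto
  also have "\<dots> = X (f j) (g j) * (\<Prod>i\<in>{..<N} - {j}. D i (f i) (g i))"
    by (intro arg_cong2[where f = "(*)"] prod.cong) auto
  finally show ?thesis .
qed

lemma kernel_expect_fun_upd_sum:
  assumes "j < N" "finite K"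
  shows "kernel_expect N S (D(j := \<lambda>a b. \<Sum>k\<in>K. c k * X k a b)) =
         (\<Sum>k\<in>K. c k * kernel_expect N S (D(j := X k)))"
proof -
  define R where "R s = (\<Prod>i\<in>{..<N} - {j}. D i (fst s ! i) (snd s ! i))" for s :: sample
  have "kernel_expect N S (D(j := \<lambda>a b. \<Sum>k\<in>K. c k * X k a b)) =
        (\<Sum>s\<in>sample_space N. \<Sum>k\<in>K. c k * (S s * (X k (fst s ! j) (snd s ! j) * R s)))"
    unfolding kernel_expect_def R_def prod_lessThan_fun_upd[OF assms(1)]
    by (simp add: sum_distrib_left sum_distrib_right mult_ac)
  also have "\<dots> = (\<Sum>k\<in>K. c k * kernel_expect N S (D(j := X k)))"
    unfolding kernel_expect_def R_def prod_lessThan_fun_upd[OF assms(1)]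
    by (subst sum.swap) (simp add: sum_distrib_left)
  finally show ?thesis .
qed

lemma cb_prob_uncorrelated_eq_sum_ones_kernel:
  "cb_prob p 0 a b = (\<Sum>k\<le>2. p ^ k * (1 - p) ^ (2 - k) * ones_kernel k a b)"
  by (cases a; cases b) (simp_all add: cb_prob_def ones_kernel_def numeral_2_eq_2 power2_eq_square)

text \<open>\<open>(1 \<le> k, k = 2)\<close> is a pair with exactly \<open>k\<close> ones, for \<open>k \<le> 2\<close>.\<close>

lemma symmetric_kernel_eq_sum_ones_kernel:
  assumes "symmetric_kernel X"
  shows "X = (\<lambda>a b. \<Sum>k\<le>2. X (1 \<le> k) (k = 2) * ones_kernel k a b)"
proof (intro ext)
  show "X a b = (\<Sum>k\<le>2. X (1 \<le> k) (k = 2) * ones_kernel k a b)" for a b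
    using assms
    by (cases a; cases b) (simp_all add: symmetric_kernel_def ones_kernel_def numeral_2_eq_2)
qed

lemma sum_atMost_2: "(\<Sum>k::nat\<le>2. f k) = f 0 + f 1 + (f 2 :: 'a :: comm_monoid_add)"
  by (simp add: numeral_2_eq_2 add.assoc)

lemma bernstein2_coeffs_eq_0:
  fixes a b c :: real
  assumes "infinite U" and "\<And>x. x \<in> U \<Longrightarrow> (1 - x)\<^sup>2 * a + x * (1 - x) * b + x\<^sup>2 * c = 0"
  shows "a = 0 \<and> b = 0 \<and> c = 0"
proof -
  define q where "q = [:a, b - 2 * a, a - b + c:]"
  have "poly q x = (1 - x)\<^sup>2 * a + x * (1 - x) * b + x\<^sup>2 * c" for x
    unfolding q_def by (simp add: power2_eq_square algebra_simps)
  then have "U \<subseteq> {x. poly q x = 0}"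
    using assms(2) by auto
  then have "q = 0"
    using assms(1) poly_roots_finite finite_subset by blast
  then show ?thesis
    unfolding q_def by simp
qed

lemma kernel_expect_fun_upd_symmetric_eq_0:
  assumes "j < N" "infinite U"
    and indep: "\<And>p. p \<in> U \<Longrightarrow> kernel_expect N S (D(j := cb_prob p 0)) = 0"
    and "symmetric_kernel X"
  shows "kernel_expect N S (D(j := X)) = 0"
proof -
  define L where "L k = kernel_expect N S (D(j := ones_kernel k))" for k
  have "kernel_expect N S (D(j := cb_prob p 0)) = (\<Sum>k\<le>2. p ^ k * (1 - p) ^ (2 - k) * L k)" for p
    unfolding cb_prob_uncorrelated_eq_sum_ones_kernel L_def
    by (rule kernel_expect_fun_upd_sum[OF assms(1)]) simp
  then have "(1 - p)\<^sup>2 * L 0 + p * (1 - p) * L 1 + p\<^sup>2 * L 2 = 0" if "p \<in> U" for p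
    using indep[OF that] by (simp add: sum_atMost_2)
  from bernstein2_coeffs_eq_0[OF assms(2) this] have "L 0 = 0 \<and> L 1 = 0 \<and> L 2 = 0" .
  have "kernel_expect N S (D(j := X)) =
        kernel_expect N S (D(j := \<lambda>a b. \<Sum>k\<le>2. X (1 \<le> k) (k = 2) * ones_kernel k a b))"
    using symmetric_kernel_eq_sum_ones_kernel[OF assms(4)]
    by (rule arg_cong[where f = "\<lambda>Y. kernel_expect N S (D(j := Y))"])
  also have "\<dots> = (\<Sum>k\<le>2. X (1 \<le> k) (k = 2) * L k)"
    unfolding L_def by (rule kernel_expect_fun_upd_sum[OF assms(1)]) simp
  finally show ?thesis
    using \<open>L 0 = 0 \<and> L 1 = 0 \<and> L 2 = 0\<close> by (simp add: sum_atMost_2)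
qed

lemma kernel_expect_symmetric_eq_0:
  assumes U: "\<And>i. i < N \<Longrightarrow> infinite (U i)"
    and indep: "\<And>p. (\<And>i. i < N \<Longrightarrow> p i \<in> U i) \<Longrightarrow>
                  kernel_expect N S (\<lambda>i. cb_prob (p i) 0) = 0"
    and sym: "\<And>i. i < N \<Longrightarrow> symmetric_kernel (D i)"
  shows "kernel_expect N S D = 0"
proof -
  have induct: "kernel_expect N S D = 0"
    if "j \<le> N" "\<And>i. i < j \<Longrightarrow> symmetric_kernel (D i)"
       "\<And>i. j \<le> i \<Longrightarrow> i < N \<Longrightarrow> \<exists>p\<in>U i. D i = cb_prob p 0" for j D
    using that
  proof (induction j arbitrary: D)
    case 0
    then have "\<forall>i\<in>{..<N}. \<exists>p. p \<in> U i \<and> D i = cb_prob p 0"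
      by auto
    then obtain p where p: "\<forall>i\<in>{..<N}. p i \<in> U i \<and> D i = cb_prob (p i) 0"
      by (auto dest!: bchoice)
    have "kernel_expect N S D = kernel_expect N S (\<lambda>i. cb_prob (p i) 0)"
      by (rule kernel_expect_cong) (simp add: p)
    also have "\<dots> = 0"
      by (rule indep) (simp add: p)
    finally show ?case .
  next
    case (Suc j)
    then have "j < N"
      by simp
    have indep_j: "kernel_expect N S (D(j := cb_prob p 0)) = 0" if "p \<in> U j" for p
    proof (rule Suc.IH)
      show "j \<le> N"
        using \<open>j < N\<close> by simp
      show "symmetric_kernel ((D(j := cb_prob p 0)) i)" if "i < j" for i
        using Suc.prems(2) that by simp
      show "\<exists>p'\<in>U i. (D(j := cb_prob p 0)) i = cb_prob p' 0" if "j \<le> i" "i < N" for i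
        using Suc.prems(3)[of i] \<open>p \<in> U j\<close> that by (cases "i = j") auto
    qed
    have "kernel_expect N S (D(j := D j)) = 0"
      using kernel_expect_fun_upd_symmetric_eq_0[OF \<open>j < N\<close> U[OF \<open>j < N\<close>] indep_j]
        Suc.prems(2)[OF lessI] by blast
    then show ?case
      by simp
  qed
  show ?thesis
    by (rule induct[OF order_refl]) (simp_all add: sym)
qed

lemma param_dist_le:
  assumes "0 \<le> \<delta>" "\<And>i. i < N \<Longrightarrow> \<bar>fst a ! i - fst b ! i\<bar> \<le> \<delta>"
    and "\<And>i. i < N \<Longrightarrow> snd a ! i = snd b ! i"
  shows "param_dist N a b \<le> sqrt N * \<delta>"
proof -
  have "(\<Sum>i<N. (fst a ! i - fst b ! i)\<^sup>2 + (snd a ! i - snd b ! i)\<^sup>2) \<le> (\<Sum>i<N. \<delta>\<^sup>2)"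
    using assms by (intro sum_mono) (simp add: abs_le_square_iff[symmetric])
  then have "param_dist N a b \<le> sqrt (N * \<delta>\<^sup>2)"
    unfolding param_dist_def by simp
  then show ?thesis
    using assms(1) by (simp add: real_sqrt_mult)
qed

lemma nondegenerate_uncorrelated_box:
  assumes "nondegenerate N \<Theta>"
  obtains c \<delta> where "\<delta> > 0"
    "\<And>p. (\<And>i. i < N \<Longrightarrow> p i \<in> {c i - \<delta> <..< c i + \<delta>}) \<Longrightarrow>
          (map p [0..<N], replicate N 0) \<in> \<Theta>"
proof -
  obtain z \<epsilon> where z: "z \<in> param_Ro N" and "\<epsilon> > 0"
    and ball: "\<And>w. w \<in> param_Ro N \<Longrightarrow> param_dist N z w < \<epsilon> \<Longrightarrow> w \<in> \<Theta>"
    using assms unfolding nondegenerate_def by blast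
  define \<delta> where "\<delta> = \<epsilon> / (sqrt N + 1)"
  have "\<delta> > 0" "sqrt N * \<delta> < \<epsilon>"
    using \<open>\<epsilon> > 0\<close> by (simp_all add: \<delta>_def field_simps add_pos_nonneg)
  moreover have "(map p [0..<N], replicate N 0) \<in> \<Theta>"
    if p: "\<And>i. i < N \<Longrightarrow> p i \<in> {fst z ! i - \<delta> <..< fst z ! i + \<delta>}" for p
  proof (rule ball)
    show "(map p [0..<N], replicate N 0) \<in> param_Ro N"
      by (simp add: param_Ro_def)
    have "\<bar>fst z ! i - p i\<bar> \<le> \<delta>" if "i < N" for i
      using p[OF that] by (simp add: abs_le_iff)
    moreover have "snd z ! i = 0" if "i < N" for i
      using z that by (auto simp: param_Ro_def)
    ultimately have "param_dist N z (map p [0..<N], replicate N 0) \<le> sqrt N * \<delta>"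
      using \<open>\<delta> > 0\<close> by (intro param_dist_le) simp_all
    then show "param_dist N z (map p [0..<N], replicate N 0) < \<epsilon>"
      using \<open>sqrt N * \<delta> < \<epsilon>\<close> by linarith
  qed
  ultimately show ?thesis
    using that by blast
qed

theorem theorem6:
  fixes N :: nat and \<Theta> :: "param set" and rhoE :: "param \<Rightarrow> real"
  assumes "N \<ge> 1"
    and "\<Theta> \<subseteq> param_R N"
    and "nondegenerate N \<Theta>"
    and "\<forall>\<theta> \<in> \<Theta>. \<forall>i<N. snd \<theta> ! i = rhoE \<theta>"
    and "\<exists>\<theta> \<in> \<Theta>. rhoE \<theta> \<noteq> 0"
  shows "\<not> (\<exists>S :: sample \<Rightarrow> real. \<forall>\<theta> \<in> \<Theta>. cb_expect N \<theta> S = rhoE \<theta>)"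
proof
  assume "\<exists>S :: sample \<Rightarrow> real. \<forall>\<theta> \<in> \<Theta>. cb_expect N \<theta> S = rhoE \<theta>"
  then obtain S :: "sample \<Rightarrow> real" where unbiased: "\<forall>\<theta> \<in> \<Theta>. cb_expect N \<theta> S = rhoE \<theta>"
    by blast
  obtain c \<delta> where "\<delta> > 0" and box:
    "\<And>p. (\<And>i. i < N \<Longrightarrow> p i \<in> {c i - \<delta> <..< c i + \<delta>}) \<Longrightarrow>
          (map p [0..<N], replicate N 0) \<in> \<Theta>"
    using nondegenerate_uncorrelated_box[OF assms(3)] by blast
  have indep: "kernel_expect N S (\<lambda>i. cb_prob (p i) 0) = 0"
    if "\<And>i. i < N \<Longrightarrow> p i \<in> {c i - \<delta> <..< c i + \<delta>}" for p
  proof -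
    have "(map p [0..<N], replicate N 0) \<in> \<Theta>"
      using box that by blast
    with unbiased assms(1,4) show ?thesis
      by (force simp: cb_expect_uncorrelated)
  qed
  obtain \<theta> where "\<theta> \<in> \<Theta>" "rhoE \<theta> \<noteq> 0"
    using assms(5) by blast
  have "kernel_expect N S (\<lambda>i. cb_prob (fst \<theta> ! i) (snd \<theta> ! i)) = 0"
    using \<open>\<delta> > 0\<close>
    by (intro kernel_expect_symmetric_eq_0[where U = "\<lambda>i. {c i - \<delta> <..< c i + \<delta>}",
          OF _ indep symmetric_kernel_cb_prob]) simp
  then show False
    using unbiased \<open>\<theta> \<in> \<Theta>\<close> \<open>rhoE \<theta> \<noteq> 0\<close> by (simp add: cb_expect_eq_kernel_expect)
qed

end
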